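(* Let $L>0$, $\mathbb{T}=\mathbb{R}/L\mathbb{Z}$, let $\gamma_k\in(0,1]$ for all $k\in\mathbb{Z}$, let $s>0$, and set $\delta^{(s)}_k=\frac{(1+k^2)^{s+1}}{\gamma_k^s}$. Let $u_0\in H_{\delta^{(s)}}(\mathbb{T})$ and let $u$ be the solution of the linear equation \[ u_t-u_{txx}+u_x+\mathscr{L}_\gamma(u)=0,\quad x\in\mathbb{T},\qquad u(0)=u_0. \] Then for all $t>0$, \[ |u(t)|_{H^1}^2\le\min\Big(e^{-s}\Big(\frac{s}{2t}\Big)^s|u_0|_{\delta^{(s)}}^2,\ |u_0|_{H^1}^2\Big). \]
   Context: For $u\in L^2(\mathbb{T})$, $\hat u_k$ is its $k$-th Fourier coefficient; in symbols $k$ stands for the frequency $2\pi k/L$. $\mathscr{L}_\gamma$ is the Fourier multiplier $\widehat{\mathscr{L}_\gamma(u)}_k=\gamma_k\hat u_k$. For a positive sequence $(\alpha_k)$, $H_\alpha(\mathbb{T})=\{u : \sum_k\alpha_k|\hat u_k|^2<\infty\}$ with $|u|_\alpha^2=\sum_k\alpha_k|\hat u_k|^2$. The $H^1$ norm is $|u|_{H^1}^2=\sum_k(1+k^2)|\hat u_k|^2$. The solution is given by $\hat u_k(t)=e^{-\frac{\gamma_k+ik}{1+k^2}t}\hat u_k(0)$. *)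

theory Defs
  imports "HOL-Analysis.Analysis"
begin

(* A function u in L^2(T), T = R/LZ, is represented by its Fourier coefficient
   sequence c :: int => complex (square summable, by Riesz-Fischer/Parseval). *)

definition freq :: "real \<Rightarrow> int \<Rightarrow> real" where
  "freq L k = 2 * pi * real_of_int k / L"

definition in_L2 :: "(int \<Rightarrow> complex) \<Rightarrow> bool" where
  "in_L2 c \<longleftrightarrow> (\<lambda>k. (cmod (c k))^2) summable_on UNIV"

definition in_H :: "(int \<Rightarrow> real) \<Rightarrow> (int \<Rightarrow> complex) \<Rightarrow> bool" where
  "in_H \<alpha> c \<longleftrightarrow> in_L2 c \<and> (\<lambda>k. \<alpha> k * (cmod (c k))^2) summable_on UNIV"

definition Hnorm2 :: "(int \<Rightarrow> real) \<Rightarrow> (int \<Rightarrow> complex) \<Rightarrow> real" where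
  "Hnorm2 \<alpha> c = (\<Sum>\<^sub>\<infinity>k. \<alpha> k * (cmod (c k))^2)"

definition H1norm2 :: "real \<Rightarrow> (int \<Rightarrow> complex) \<Rightarrow> real" where
  "H1norm2 L c = Hnorm2 (\<lambda>k. 1 + (freq L k)^2) c"

definition delta :: "real \<Rightarrow> (int \<Rightarrow> real) \<Rightarrow> real \<Rightarrow> int \<Rightarrow> real" where
  "delta L \<gamma> s k = (1 + (freq L k)^2) powr (s + 1) / (\<gamma> k) powr s"

(* Fourier coefficients of the solution u(t) of u_t - u_txx + u_x + L_gamma(u) = 0, u(0)=u0 *)
definition sol :: "real \<Rightarrow> (int \<Rightarrow> real) \<Rightarrow> (int \<Rightarrow> complex) \<Rightarrow> real \<Rightarrow> int \<Rightarrow> complex" where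
  "sol L \<gamma> c t k =
     exp (- ((complex_of_real (\<gamma> k) + \<i> * complex_of_real (freq L k))
             / complex_of_real (1 + (freq L k)^2)) * complex_of_real t) * c k"

end

theory Submission
  imports Defs
begin

text \<open>The solution acts diagonally: mode \<open>k\<close> is damped by the factor
  \<open>exp (-2 \<gamma>\<^sub>k t / (1 + k\<^sup>2))\<close> in squared modulus. Since this factor is at most 1, the
  \<open>H\<^sup>1\<close> norm does not increase. For the smoothing bound, the elementary estimate
  \<open>e\<^sup>-\<^sup>x \<le> e\<^sup>-\<^sup>s (s/x)\<^sup>s\<close> (equivalent to \<open>ln y \<le> y - 1\<close>) applied with
  \<open>x = 2 \<gamma>\<^sub>k t / (1 + k\<^sup>2)\<close> trades the decay for the weight
  \<open>(1 + k\<^sup>2)\<^sup>s / \<gamma>\<^sub>k\<^sup>s\<close>, which turns the \<open>H\<^sup>1\<close> weight into \<open>\<delta>\<^sup>(\<^sup>s\<^sup>)\<close>.\<close>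

lemma exp_minus_le_powr:
  fixes x s :: real
  assumes "x > 0" "s > 0"
  shows "exp (- x) \<le> exp (- s) * (s / x) powr s"
proof -
  have "ln (x / s) \<le> x / s - 1" using assms by (intro ln_le_minus_one) simp
  hence "s * (ln x - ln s) \<le> x - s" using assms by (simp add: field_simps ln_div)
  hence "exp (- x) \<le> exp (- s + s * (ln s - ln x))" by (simp add: algebra_simps)
  also have "\<dots> = exp (- s) * (s / x) powr s"
    using assms by (simp add: exp_add[symmetric] powr_def ln_div mult.commute)
  finally show ?thesis .
qed

lemma le_powr_div_powr:
  fixes a g s :: real
  assumes "1 \<le> a" "0 < g" "g \<le> 1" "0 < s"
  shows "a \<le> a powr (s + 1) / g powr s"
proof -
  have "a = a powr 1" using assms by simp
  also have "\<dots> \<le> a powr (s + 1)" using assms by (intro powr_mono) auto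
  also have "\<dots> \<le> a powr (s + 1) / g powr s"
    using assms by (simp add: le_divide_eq powr_le1 mult_left_le)
  finally show ?thesis .
qed

lemma mult_exp_decay_le:
  fixes a g s t :: real
  assumes "0 < a" "0 < g" "0 < s" "0 < t"
  shows "a * exp (- (2 * g * t / a)) \<le> exp (- s) * (s / (2 * t)) powr s * (a powr (s + 1) / g powr s)"
proof -
  have "exp (- (2 * g * t / a)) \<le> exp (- s) * (s / (2 * g * t / a)) powr s"
    using assms by (intro exp_minus_le_powr) auto
  also have "(s / (2 * g * t / a)) powr s = (s / (2 * t)) powr s * a powr s / g powr s"
    using assms by (simp add: powr_divide powr_mult field_simps)
  finally have "a * exp (- (2 * g * t / a)) \<le> a * (exp (- s) * ((s / (2 * t)) powr s * a powr s / g powr s))"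
    using assms by (intro mult_left_mono) auto
  also have "\<dots> = exp (- s) * (s / (2 * t)) powr s * (a powr (s + 1) / g powr s)"
    using assms by (simp add: powr_add)
  finally show ?thesis .
qed

definition H1_weight :: "real \<Rightarrow> int \<Rightarrow> real" where
  "H1_weight L k = 1 + (freq L k)\<^sup>2"

lemma one_le_H1_weight: "1 \<le> H1_weight L k"
  by (simp add: H1_weight_def)

lemma H1norm2_eq_Hnorm2: "H1norm2 L = Hnorm2 (H1_weight L)"
  unfolding H1norm2_def H1_weight_def[abs_def] ..

lemma delta_eq: "delta L \<gamma> s k = H1_weight L k powr (s + 1) / \<gamma> k powr s"
  by (simp add: delta_def H1_weight_def)

lemma norm_sol_squared:
  "(cmod (sol L \<gamma> c t k))\<^sup>2 = exp (- (2 * \<gamma> k * t / H1_weight L k)) * (cmod (c k))\<^sup>2"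
proof -
  define a where "a = H1_weight L k"
  have "a > 0" using one_le_H1_weight[of L k] by (simp add: a_def)
  hence "(complex_of_real (\<gamma> k) + \<i> * complex_of_real (freq L k)) / complex_of_real a
      = complex_of_real (\<gamma> k / a) + \<i> * complex_of_real (freq L k / a)"
    by (simp add: field_simps)
  hence "cmod (sol L \<gamma> c t k) = exp (- (\<gamma> k * t / a)) * cmod (c k)"
    unfolding sol_def by (simp add: a_def H1_weight_def norm_mult)
  hence "(cmod (sol L \<gamma> c t k))\<^sup>2 = (exp (- (\<gamma> k * t / a)))\<^sup>2 * (cmod (c k))\<^sup>2"
    by (simp add: power_mult_distrib)
  also have "(exp (- (\<gamma> k * t / a)))\<^sup>2 = exp (- (2 * \<gamma> k * t / a))"
    by (simp add: power2_eq_square exp_add[symmetric])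
  finally show ?thesis by (simp add: a_def)
qed

lemma in_H_mono:
  assumes "in_H \<beta> c" "\<And>k. 0 \<le> \<alpha> k" "\<And>k. \<alpha> k \<le> \<beta> k"
  shows "in_H \<alpha> c"
proof -
  have "(\<lambda>k. \<beta> k * (cmod (c k))\<^sup>2) summable_on UNIV" and "in_L2 c"
    using assms(1) by (simp_all add: in_H_def)
  moreover have "\<alpha> k * (cmod (c k))\<^sup>2 \<le> \<beta> k * (cmod (c k))\<^sup>2" for k
    using assms(3) by (rule mult_right_mono) simp
  moreover have "0 \<le> \<alpha> k * (cmod (c k))\<^sup>2" for k
    using assms(2) by simp
  ultimately show ?thesis
    unfolding in_H_def by (blast intro: summable_on_comparison_test)
qed

lemma Hnorm2_le:
  assumes "(\<lambda>k. \<beta> k * (cmod (d k))\<^sup>2) summable_on UNIV"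
    and "\<And>k. 0 \<le> \<alpha> k * (cmod (c k))\<^sup>2"
    and "\<And>k. \<alpha> k * (cmod (c k))\<^sup>2 \<le> \<beta> k * (cmod (d k))\<^sup>2"
  shows "Hnorm2 \<alpha> c \<le> Hnorm2 \<beta> d"
proof -
  have "(\<lambda>k. \<alpha> k * (cmod (c k))\<^sup>2) summable_on UNIV"
    by (intro summable_on_comparison_test[OF assms(1)] assms(2,3))
  thus ?thesis unfolding Hnorm2_def by (intro infsum_mono assms(1,3))
qed

lemma Hnorm2_cmult: "Hnorm2 (\<lambda>k. C * \<alpha> k) c = C * Hnorm2 \<alpha> c"
  unfolding Hnorm2_def by (simp add: mult.assoc infsum_cmult_right')

lemma in_H_delta_imp_in_H1:
  assumes "in_H (delta L \<gamma> s) c" "\<And>k. 0 < \<gamma> k" "\<And>k. \<gamma> k \<le> 1" "0 < s"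
  shows "in_H (H1_weight L) c"
proof (rule in_H_mono[OF assms(1)])
  show "0 \<le> H1_weight L k" for k
    using one_le_H1_weight[of L k] by linarith
  show "H1_weight L k \<le> delta L \<gamma> s k" for k
    using le_powr_div_powr[OF one_le_H1_weight assms(2,3,4)] by (simp only: delta_eq)
qed

lemma H1norm2_sol_le:
  assumes "in_H (H1_weight L) c" "\<And>k. 0 \<le> \<gamma> k" "0 \<le> t"
  shows "H1norm2 L (sol L \<gamma> c t) \<le> H1norm2 L c"
  unfolding H1norm2_eq_Hnorm2
proof (rule Hnorm2_le)
  show "(\<lambda>k. H1_weight L k * (cmod (c k))\<^sup>2) summable_on UNIV"
    using assms(1) by (simp add: in_H_def)
  show "0 \<le> H1_weight L k * (cmod (sol L \<gamma> c t k))\<^sup>2" for k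
    using one_le_H1_weight[of L k] by simp
  show "H1_weight L k * (cmod (sol L \<gamma> c t k))\<^sup>2 \<le> H1_weight L k * (cmod (c k))\<^sup>2" for k
    using one_le_H1_weight[of L k] assms(2)[of k] assms(3) unfolding norm_sol_squared
    by (intro mult_left_mono mult_left_le_one_le) auto
qed

lemma H1norm2_sol_le_delta:
  assumes "in_H (delta L \<gamma> s) c" "\<And>k. 0 < \<gamma> k" "0 < s" "0 < t"
  shows "H1norm2 L (sol L \<gamma> c t) \<le> exp (- s) * (s / (2 * t)) powr s * Hnorm2 (delta L \<gamma> s) c"
proof -
  define C where "C = exp (- s) * (s / (2 * t)) powr s"
  have "Hnorm2 (H1_weight L) (sol L \<gamma> c t) \<le> Hnorm2 (\<lambda>k. C * delta L \<gamma> s k) c"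
  proof (rule Hnorm2_le)
    show "(\<lambda>k. C * delta L \<gamma> s k * (cmod (c k))\<^sup>2) summable_on UNIV"
      using assms(1) by (simp add: in_H_def mult.assoc summable_on_cmult_right)
    show "0 \<le> H1_weight L k * (cmod (sol L \<gamma> c t k))\<^sup>2" for k
      using one_le_H1_weight[of L k] by simp
    fix k
    have "H1_weight L k * exp (- (2 * \<gamma> k * t / H1_weight L k)) \<le> C * delta L \<gamma> s k"
      using mult_exp_decay_le[of "H1_weight L k" "\<gamma> k" s t] one_le_H1_weight[of L k] assms(2-4)
      by (simp add: delta_eq C_def)
    from mult_right_mono[OF this zero_le_power2]
    show "H1_weight L k * (cmod (sol L \<gamma> c t k))\<^sup>2 \<le> C * delta L \<gamma> s k * (cmod (c k))\<^sup>2"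
      by (simp add: norm_sol_squared mult.assoc)
  qed
  thus ?thesis by (simp add: H1norm2_eq_Hnorm2 Hnorm2_cmult C_def)
qed

theorem mainTheorem5:
  fixes L s t :: real and \<gamma> :: "int \<Rightarrow> real" and u0 :: "int \<Rightarrow> complex"
  assumes "L > 0"
    and "\<forall>k. 0 < \<gamma> k \<and> \<gamma> k \<le> 1"
    and "s > 0"
    and "in_H (delta L \<gamma> s) u0"
    and "t > 0"
  shows "H1norm2 L (sol L \<gamma> u0 t)
     \<le> min (exp (- s) * (s / (2 * t)) powr s * Hnorm2 (delta L \<gamma> s) u0) (H1norm2 L u0)"
proof -
  have \<gamma>: "0 < \<gamma> k" "\<gamma> k \<le> 1" for k
    using assms(2) by auto
  have "in_H (H1_weight L) u0"
    by (rule in_H_delta_imp_in_H1[OF assms(4) \<gamma> assms(3)])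
  hence "H1norm2 L (sol L \<gamma> u0 t) \<le> H1norm2 L u0"
    using \<gamma>(1) assms(5) by (intro H1norm2_sol_le) (auto intro: less_imp_le)
  moreover have "H1norm2 L (sol L \<gamma> u0 t) \<le> exp (- s) * (s / (2 * t)) powr s * Hnorm2 (delta L \<gamma> s) u0"
    using assms(3,4,5) \<gamma>(1) by (intro H1norm2_sol_le_delta)
  ultimately show ?thesis by simp
qed

end
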